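(* Let $\mathcal{O}$ be the fixed one-counter net described in the context and let the formulas $\psi_i$ ($i\ge1$) be as defined there. Then for all $n\ge0$ and $i\ge1$: $(\bar t,n)\models\psi_i$ if and only if $\mathrm{bit}_i(n)=1$.
   Context: $\mathrm{bit}_i(n)$ is the $i$-th least significant bit of $n$, i.e. $n=\sum_{i\ge1}2^{i-1}\mathrm{bit}_i(n)$. A one-counter net is a tuple $(Q,\{Q_p\},\delta_0,\delta_{>0})$ with $\delta_0\subseteq Q\times\{0,1\}\times Q$, $\delta_{>0}\subseteq Q\times\{-1,0,1\}\times Q$ and $\delta_0\subseteq\delta_{>0}$; its transition system has states $Q\times\mathbb{N}$, $(q,n)$ satisfies $p$ iff $q\in Q_p$, and $(q,n)\to(q',n+k)$ iff either $n=0$ and $(q,k,q')\in\delta_0$, or $n>0$ and $(q,k,q')\in\delta_{>0}$. The fixed net $\mathcal{O}$ has control locations $t,\bar t,q_0,q_1,q_2,q_3,f,g,p_0,p_1$; the atomic propositions are the control locations, each holding exactly at itself. $\delta_{>0}$ consists of $(q_0,-1,q_1)$, $(q_1,-1,q_2)$, $(q_2,-1,q_3)$, $(q_3,-1,q_0)$, $(q_1,-1,q_1)$, $(q_3,-1,q_3)$, $(q_0,0,t)$, $(t,0,q_0)$, $(q_2,0,t)$, $(q_1,0,\bar t)$, $(\bar t,0,q_1)$, $(\bar t,0,q_2)$, $(q_3,0,\bar t)$, $(\bar t,0,q_3)$, $(t,0,f)$, $(\bar t,-1,f)$, $(f,-1,g)$, $(g,-1,f)$, $(\bar t,1,p_1)$,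 $(p_1,1,p_1)$, $(p_1,0,\bar t)$, $(p_0,0,\bar t)$, $(\bar t,0,p_0)$; and $\delta_0=\{(\bar t,1,p_1),(p_0,0,\bar t),(\bar t,0,p_0),(t,0,q_0),(t,0,f)\}$. $\mathsf{CTL}$ is interpreted with standard semantics; $\mathsf{EF}\psi$ abbreviates $\exists\,\mathtt{true}\,\mathsf{U}\,\psi$. Let $\mathrm{test}=t\vee\bar t$, $\varphi_\diamond=q_0\vee q_1\vee q_2\vee q_3$, $\varphi_1=\mathrm{test}\wedge\exists\mathsf{X}\big(f\wedge\mathsf{EF}(f\wedge\neg\exists\mathsf{X}g)\big)$, and for $i>1$: $\mu_i=\exists(\varphi_\diamond\wedge\exists\mathsf{X}\varphi_{i-1})\,\mathsf{U}\,(q_0\wedge\neg\exists\mathsf{X}q_1)$, $\varphi_i=\mathrm{test}\wedge\exists\mathsf{X}\mu_i$. Finally $\psi_1=\varphi_1$ and $\psi_i=\bar t\wedge\exists\mathsf{X}\big((q_1\vee q_2)\wedge\mu_i\big)$ for $i>1$. *)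

theory Defs
  imports Main
begin

definition bitn :: "nat \<Rightarrow> nat \<Rightarrow> nat" where
  "bitn i n = (n div 2 ^ (i - 1)) mod 2"

text \<open>A one-counter net: transitions at counter zero (d0) and at positive counter (dpos),
  each a set of triples (q, k, q') with k an integer displacement; states are pairs
  (control location, counter value).\<close>
record 'q ocn =
  delta0 :: "('q \<times> int \<times> 'q) set"
  deltapos :: "('q \<times> int \<times> 'q) set"

definition ocn_step :: "'q ocn \<Rightarrow> ('q \<times> nat) \<Rightarrow> ('q \<times> nat) \<Rightarrow> bool" where
  "ocn_step N s s' \<longleftrightarrow>
     (snd s = 0 \<and> (\<exists>k. (fst s, k, fst s') \<in> delta0 N \<and> int (snd s') = int (snd s) + k)) \<or>
     (snd s > 0 \<and> (\<exists>k. (fst s, k, fst s') \<in> deltapos N \<and> int (snd s') = int (snd s) + k))"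

datatype 'ap ctl =
    Atom 'ap
  | TT
  | Neg "'ap ctl"
  | Conj "'ap ctl" "'ap ctl"
  | Disj "'ap ctl" "'ap ctl"
  | ExX "'ap ctl"
  | ExU "'ap ctl" "'ap ctl"

primrec sat :: "('s \<Rightarrow> 's \<Rightarrow> bool) \<Rightarrow> ('s \<Rightarrow> 'ap \<Rightarrow> bool) \<Rightarrow> 's \<Rightarrow> 'ap ctl \<Rightarrow> bool" where
  "sat R L s (Atom p) = L s p"
| "sat R L s TT = True"
| "sat R L s (Neg \<phi>) = (\<not> sat R L s \<phi>)"
| "sat R L s (Conj \<phi> \<psi>) = (sat R L s \<phi> \<and> sat R L s \<psi>)"
| "sat R L s (Disj \<phi> \<psi>) = (sat R L s \<phi> \<or> sat R L s \<psi>)"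
| "sat R L s (ExX \<phi>) = (\<exists>s'. R s s' \<and> sat R L s' \<phi>)"
| "sat R L s (ExU \<phi> \<psi>) =
     (\<exists>(p :: nat \<Rightarrow> 's) k. p 0 = s \<and> (\<forall>j<k. R (p j) (p (Suc j))) \<and>
        sat R L (p k) \<psi> \<and> (\<forall>j<k. sat R L (p j) \<phi>))"

abbreviation ExF :: "'ap ctl \<Rightarrow> 'ap ctl" where
  "ExF \<psi> \<equiv> ExU TT \<psi>"

datatype loc = t | tb | q0 | q1 | q2 | q3 | f | g | p0 | p1

definition O_net :: "loc ocn" where
  "O_net = \<lparr> delta0 = {(tb,1,p1), (p0,0,tb), (tb,0,p0), (t,0,q0), (t,0,f)},
             deltapos = {(q0,-1,q1), (q1,-1,q2), (q2,-1,q3), (q3,-1,q0), (q1,-1,q1), (q3,-1,q3),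
               (q0,0,t), (t,0,q0), (q2,0,t), (q1,0,tb), (tb,0,q1), (tb,0,q2), (q3,0,tb), (tb,0,q3),
               (t,0,f), (tb,-1,f), (f,-1,g), (g,-1,f), (tb,1,p1), (p1,1,p1), (p1,0,tb),
               (p0,0,tb), (tb,0,p0)} \<rparr>"

definition O_lab :: "loc \<times> nat \<Rightarrow> loc \<Rightarrow> bool" where
  "O_lab s p \<longleftrightarrow> fst s = p"

definition O_sat :: "loc \<times> nat \<Rightarrow> loc ctl \<Rightarrow> bool" where
  "O_sat s \<phi> = sat (ocn_step O_net) O_lab s \<phi>"

definition test :: "loc ctl" where "test = Disj (Atom t) (Atom tb)"

definition diamond :: "loc ctl" where
  "diamond = Disj (Atom q0) (Disj (Atom q1) (Disj (Atom q2) (Atom q3)))"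

definition phi1 :: "loc ctl" where
  "phi1 = Conj test (ExX (Conj (Atom f) (ExF (Conj (Atom f) (Neg (ExX (Atom g)))))))"

definition mu_of :: "loc ctl \<Rightarrow> loc ctl" where
  "mu_of \<phi> = ExU (Conj diamond (ExX \<phi>)) (Conj (Atom q0) (Neg (ExX (Atom q1))))"

text \<open>phi i for i >= 1 (phi 0 is an irrelevant dummy value).\<close>
fun phi :: "nat \<Rightarrow> loc ctl" where
  "phi 0 = TT"
| "phi (Suc 0) = phi1"
| "phi (Suc (Suc j)) = Conj test (ExX (mu_of (phi (Suc j))))"

definition mu :: "nat \<Rightarrow> loc ctl" where
  "mu i = mu_of (phi (i - 1))"

fun psi :: "nat \<Rightarrow> loc ctl" where
  "psi 0 = TT"
| "psi (Suc 0) = phi 1"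
| "psi (Suc (Suc j)) = Conj (Atom tb) (ExX (Conj (Disj (Atom q1) (Atom q2)) (mu (Suc (Suc j)))))"

end

theory Submission
  imports Defs
begin

text \<open>By induction on j, \<phi>_j holds at (t, c) iff 2^j divides c and at (tb, c) iff it
  does not; for j = 1 this is the parity check f (g f)^* down to counter 0. A witness path
  for \<mu>_(j+1) from (q, c) stays in the diamond q0 \<rightarrow> q1 \<rightarrow> q2 \<rightarrow> q3 \<rightarrow> q0, decrementing the
  counter at every step, and the side condition EX \<phi>_j forces the counter to be a multiple
  of 2^j in q0 and q2 (exit to t) and a non-multiple in q1 and q3 (exit to tb). Since the
  path must end in q0 at counter 0, it is unique: the location at counter value c is
  determined by c mod 2^j and the parity of c div 2^j, and lies in {q1, q2} iff that
  quotient is odd, i.e. iff bit_(j+1)(c) = 1. From tb, \<psi>_(j+1) moves into q1 or q2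
  without touching the counter.\<close>

lemma sat_ExU_unfold:
  "sat R L s (ExU a b) \<longleftrightarrow>
     sat R L s b \<or> (sat R L s a \<and> (\<exists>s'. R s s' \<and> sat R L s' (ExU a b)))"
proof
  assume "sat R L s (ExU a b)"
  then obtain p k where p: "p 0 = s" "\<forall>j<k. R (p j) (p (Suc j))" "sat R L (p k) b"
      "\<forall>j<k. sat R L (p j) a" by auto
  show "sat R L s b \<or> (sat R L s a \<and> (\<exists>s'. R s s' \<and> sat R L s' (ExU a b)))"
  proof (cases k)
    case 0
    then show ?thesis using p by auto
  next
    case (Suc k')
    have "sat R L (p 1) (ExU a b)"
      using p Suc by (auto intro!: exI[of _ "\<lambda>j. p (Suc j)"] exI[of _ k'])
    moreover have "R s (p 1)" "sat R L s a" using p Suc by auto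
    ultimately show ?thesis by blast
  qed
next
  assume "sat R L s b \<or> (sat R L s a \<and> (\<exists>s'. R s s' \<and> sat R L s' (ExU a b)))"
  then show "sat R L s (ExU a b)"
  proof
    assume "sat R L s b"
    then show ?thesis by (auto intro!: exI[of _ "\<lambda>_. s"] exI[of _ 0])
  next
    assume "sat R L s a \<and> (\<exists>s'. R s s' \<and> sat R L s' (ExU a b))"
    then obtain s' p k where h: "sat R L s a" "R s s'" "p 0 = s'" "\<forall>j<k. R (p j) (p (Suc j))"
      "sat R L (p k) b" "\<forall>j<k. sat R L (p j) a" by auto
    define p' where "p' = (\<lambda>j. if j = 0 then s else p (j - 1))"
    have "p' 0 = s" by (simp add: p'_def)
    moreover have "\<forall>j<Suc k. R (p' j) (p' (Suc j))"
      using h by (auto simp: p'_def less_Suc_eq_0_disj)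
    moreover have "sat R L (p' (Suc k)) b" using h by (simp add: p'_def)
    moreover have "\<forall>j<Suc k. sat R L (p' j) a"
      using h by (auto simp: p'_def less_Suc_eq_0_disj)
    ultimately show ?thesis by (simp only: sat.simps) blast
  qed
qed

text \<open>The location at counter value c of the witness path for \<mu>, when its tests check
  divisibility by K.\<close>
definition phase :: "nat \<Rightarrow> nat \<Rightarrow> loc" where
  "phase K c = (if c mod K = 0 then (if even (c div K) then q0 else q2)
                else (if even (c div K) then q3 else q1))"

lemma phase_mult_add:
  "r < K \<Longrightarrow> phase K (K * a + r) =
     (if r = 0 then (if even a then q0 else q2) else (if even a then q3 else q1))"
  by (simp add: phase_def)

lemma phase_in_diamond: "phase K c \<in> {q0, q1, q2, q3}"
  by (auto simp: phase_def)

lemma phase_eq_q0_iff: "0 < K \<Longrightarrow> phase K c = q0 \<longleftrightarrow> (2 * K) dvd c"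
proof -
  assume "0 < K"
  have "c mod (K * 2) = K * (c div K mod 2) + c mod K" by (rule mod_mult2_eq)
  with \<open>0 < K\<close> have "(2 * K) dvd c \<longleftrightarrow> c mod K = 0 \<and> c div K mod 2 = 0"
    by (auto simp: dvd_eq_mod_eq_0 mult.commute)
  then show ?thesis by (auto simp: phase_def)
qed

lemma phase_in_q12_iff: "phase K c \<in> {q1, q2} \<longleftrightarrow> odd (c div K)"
  by (auto simp: phase_def)

lemma phase_Suc_eq_iff:
  assumes "2 \<le> K"
  shows "phase K (Suc m) = q0 \<longleftrightarrow> K dvd Suc m \<and> phase K m = q1"
    and "phase K (Suc m) = q1 \<longleftrightarrow> \<not> K dvd Suc m \<and> phase K m \<in> {q1, q2}"
    and "phase K (Suc m) = q2 \<longleftrightarrow> K dvd Suc m \<and> phase K m = q3"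
    and "phase K (Suc m) = q3 \<longleftrightarrow> \<not> K dvd Suc m \<and> phase K m \<in> {q0, q3}"
proof -
  define a r where "a = Suc m div K" and "r = Suc m mod K"
  have e: "Suc m = K * a + r" and "r < K" using assms by (simp_all add: a_def r_def)
  have dvd: "K dvd Suc m \<longleftrightarrow> r = 0" by (simp add: r_def dvd_eq_mod_eq_0)
  have "(phase K (Suc m) = q0 \<longleftrightarrow> K dvd Suc m \<and> phase K m = q1) \<and>
    (phase K (Suc m) = q1 \<longleftrightarrow> \<not> K dvd Suc m \<and> phase K m \<in> {q1, q2}) \<and>
    (phase K (Suc m) = q2 \<longleftrightarrow> K dvd Suc m \<and> phase K m = q3) \<and>
    (phase K (Suc m) = q3 \<longleftrightarrow> \<not> K dvd Suc m \<and> phase K m \<in> {q0, q3})"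
  proof (cases "r = 0")
    case True
    with e have "0 < a" by (cases a) auto
    with True e assms have m: "m = K * (a - 1) + (K - 1)"
      by (cases a) (auto simp: algebra_simps)
    have "phase K m = (if even (a - 1) then q3 else q1)"
      unfolding m using assms by (subst phase_mult_add) auto
    moreover have "phase K (Suc m) = (if even a then q0 else q2)"
      unfolding e using True \<open>r < K\<close> by (subst phase_mult_add) auto
    ultimately show ?thesis using \<open>0 < a\<close> True dvd by (cases a) auto
  next
    case False
    with e have m: "m = K * a + (r - 1)" by simp
    have "phase K m = (if r - 1 = 0 then (if even a then q0 else q2) else (if even a then q3 else q1))"
      unfolding m using \<open>r < K\<close> by (subst phase_mult_add) auto
    moreover have "phase K (Suc m) = (if even a then q3 else q1)"
      unfolding e using False \<open>r < K\<close> by (subst phase_mult_add) auto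
    ultimately show ?thesis using False dvd by auto
  qed
  then show "phase K (Suc m) = q0 \<longleftrightarrow> K dvd Suc m \<and> phase K m = q1"
    and "phase K (Suc m) = q1 \<longleftrightarrow> \<not> K dvd Suc m \<and> phase K m \<in> {q1, q2}"
    and "phase K (Suc m) = q2 \<longleftrightarrow> K dvd Suc m \<and> phase K m = q3"
    and "phase K (Suc m) = q3 \<longleftrightarrow> \<not> K dvd Suc m \<and> phase K m \<in> {q0, q3}"
    by blast+
qed

lemma ocn_step_iff:
  "ocn_step N (l, n) (l', n') \<longleftrightarrow>
     (n = 0 \<and> (l, int n' - int n, l') \<in> delta0 N) \<or> (0 < n \<and> (l, int n' - int n, l') \<in> deltapos N)"
  unfolding ocn_step_def by (auto simp: algebra_simps)

lemma O_step_t: "ocn_step O_net (t, n) (l', n') \<longleftrightarrow> (l', n') = (q0, n) \<or> (l', n') = (f, n)"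
  unfolding ocn_step_iff by (cases l'; simp add: O_net_def; arith?)

lemma O_step_tb: "ocn_step O_net (tb, n) (l', n') \<longleftrightarrow>
   (n = 0 \<and> ((l', n') = (p1, 1) \<or> (l', n') = (p0, 0))) \<or>
   (0 < n \<and> ((l', n') = (q1, n) \<or> (l', n') = (q2, n) \<or> (l', n') = (q3, n) \<or>
              (l', n') = (f, n - 1) \<or> (l', n') = (p1, n + 1) \<or> (l', n') = (p0, n)))"
  unfolding ocn_step_iff by (cases l'; simp add: O_net_def; arith?)

lemma O_step_q0: "ocn_step O_net (q0, n) (l', n') \<longleftrightarrow> 0 < n \<and> ((l', n') = (q1, n - 1) \<or> (l', n') = (t, n))"
  unfolding ocn_step_iff by (cases l'; simp add: O_net_def; arith?)

lemma O_step_q1: "ocn_step O_net (q1, n) (l', n') \<longleftrightarrow>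
   0 < n \<and> ((l', n') = (q2, n - 1) \<or> (l', n') = (q1, n - 1) \<or> (l', n') = (tb, n))"
  unfolding ocn_step_iff by (cases l'; simp add: O_net_def; arith?)

lemma O_step_q2: "ocn_step O_net (q2, n) (l', n') \<longleftrightarrow> 0 < n \<and> ((l', n') = (q3, n - 1) \<or> (l', n') = (t, n))"
  unfolding ocn_step_iff by (cases l'; simp add: O_net_def; arith?)

lemma O_step_q3: "ocn_step O_net (q3, n) (l', n') \<longleftrightarrow>
   0 < n \<and> ((l', n') = (q0, n - 1) \<or> (l', n') = (q3, n - 1) \<or> (l', n') = (tb, n))"
  unfolding ocn_step_iff by (cases l'; simp add: O_net_def; arith?)

lemma O_step_f: "ocn_step O_net (f, n) (l', n') \<longleftrightarrow> 0 < n \<and> (l', n') = (g, n - 1)"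
  unfolding ocn_step_iff by (cases l'; simp add: O_net_def; arith?)

lemma O_step_g: "ocn_step O_net (g, n) (l', n') \<longleftrightarrow> 0 < n \<and> (l', n') = (f, n - 1)"
  unfolding ocn_step_iff by (cases l'; simp add: O_net_def; arith?)

lemmas O_steps = O_step_t O_step_tb O_step_q0 O_step_q1 O_step_q2 O_step_q3 O_step_f O_step_g

lemma O_sat_Atom [simp]: "O_sat (l, n) (Atom p) \<longleftrightarrow> l = p"
  by (simp add: O_sat_def O_lab_def)

lemma O_sat_TT [simp]: "O_sat s TT"
  by (simp add: O_sat_def)

lemma O_sat_Neg [simp]: "O_sat s (Neg a) \<longleftrightarrow> \<not> O_sat s a"
  by (simp add: O_sat_def)

lemma O_sat_Conj [simp]: "O_sat s (Conj a b) \<longleftrightarrow> O_sat s a \<and> O_sat s b"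
  by (simp add: O_sat_def)

lemma O_sat_Disj [simp]: "O_sat s (Disj a b) \<longleftrightarrow> O_sat s a \<or> O_sat s b"
  by (simp add: O_sat_def)

lemma O_sat_ExX:
  "O_sat (l, n) (ExX a) \<longleftrightarrow> (\<exists>l' n'. ocn_step O_net (l, n) (l', n') \<and> O_sat (l', n') a)"
  by (simp add: O_sat_def)

lemma O_sat_ExU:
  "O_sat (l, n) (ExU a b) \<longleftrightarrow> O_sat (l, n) b \<or>
     (O_sat (l, n) a \<and> (\<exists>l' n'. ocn_step O_net (l, n) (l', n') \<and> O_sat (l', n') (ExU a b)))"
  unfolding O_sat_def by (subst sat_ExU_unfold) auto

lemmas O_sat_ExX_unfold = O_sat_ExX O_steps conj_disj_distribR ex_disj_distrib

lemma O_sat_f_EF_f_zero_iff: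
  "O_sat (f, m) (ExF (Conj (Atom f) (Neg (ExX (Atom g))))) \<longleftrightarrow> even m"
  (is "O_sat _ (ExF ?zero) \<longleftrightarrow> _")
proof (induction m rule: less_induct)
  case (less m)
  have f_next: "O_sat (f, k) (ExX (Atom g)) \<longleftrightarrow> 0 < k" for k
    by (auto simp: O_sat_ExX O_step_f)
  have g: "O_sat (g, k) (ExF ?zero) \<longleftrightarrow> 0 < k \<and> O_sat (f, k - 1) (ExF ?zero)" for k
    by (subst O_sat_ExU) (auto simp: O_step_g)
  have "O_sat (f, m) (ExF ?zero) \<longleftrightarrow> m = 0 \<or> (1 < m \<and> O_sat (f, m - 2) (ExF ?zero))"
    by (subst O_sat_ExU) (auto simp: f_next O_step_f g numeral_2_eq_2)
  also have "\<dots> \<longleftrightarrow> even m"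
    using less[of "m - 2"] by (cases m) (auto, presburger+)
  finally show ?case .
qed

definition phi_tests_dvd :: "nat \<Rightarrow> bool" where
  "phi_tests_dvd j \<longleftrightarrow>
     (\<forall>c. (O_sat (t, c) (phi j) \<longleftrightarrow> 2 ^ j dvd c) \<and> (O_sat (tb, c) (phi j) \<longleftrightarrow> \<not> 2 ^ j dvd c))"

lemma phi_tests_dvd_1: "phi_tests_dvd 1"
proof -
  have "O_sat (t, c) (phi 1) \<longleftrightarrow> even c" for c
    using O_sat_f_EF_f_zero_iff[of c] by (auto simp: phi1_def test_def O_sat_ExX O_step_t)
  moreover have "O_sat (tb, c) (phi 1) \<longleftrightarrow> odd c" for c
    using O_sat_f_EF_f_zero_iff[of "c - 1"]
    by (cases c) (auto simp: phi1_def test_def O_sat_ExX O_step_tb)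
  ultimately show ?thesis by (simp add: phi_tests_dvd_def)
qed

lemma O_sat_phi_imp_test: "1 \<le> j \<Longrightarrow> O_sat (l, m) (phi j) \<Longrightarrow> l = t \<or> l = tb"
  by (cases j rule: phi.cases) (auto simp: phi1_def test_def)

lemma O_sat_mu_of_imp_diamond: "O_sat (l, m) (mu_of a) \<Longrightarrow> l \<in> {q0, q1, q2, q3}"
  unfolding mu_of_def by (subst (asm) O_sat_ExU) (auto simp: diamond_def)

lemma O_sat_mu_of_phi_iff:
  assumes "1 \<le> j" and "phi_tests_dvd j"
  shows "O_sat (l, m) (mu_of (phi j)) \<longleftrightarrow> l = phase (2 ^ j) m"
proof (induction m arbitrary: l)
  case 0
  show ?case
    by (subst mu_of_def, subst O_sat_ExU, cases l) (auto simp: diamond_def O_sat_ExX O_steps phase_def)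
next
  case (Suc m)
  let ?K = "(2::nat) ^ j"
  have "2 \<le> ?K" using \<open>1 \<le> j\<close> by (cases j) auto
  have test: "O_sat (t, c) (phi j) \<longleftrightarrow> ?K dvd c" "O_sat (tb, c) (phi j) \<longleftrightarrow> \<not> ?K dvd c" for c
    using assms(2) by (auto simp: phi_tests_dvd_def)
  have not_test: "\<not> O_sat (l', n') (phi j)" if "l' \<notin> {t, tb}" for l' n'
    using O_sat_phi_imp_test[OF \<open>1 \<le> j\<close>] that by blast
  have not_mu: "\<not> O_sat (l', n') (mu_of (phi j))" if "l' \<in> {t, tb}" for l' n'
    using O_sat_mu_of_imp_diamond that by blast
  show ?case
  proof (cases "l \<in> {q0, q1, q2, q3}")
    case False
    then show ?thesis using O_sat_mu_of_imp_diamond phase_in_diamond by metis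
  next
    case True
    have next_test: "O_sat (l, Suc m) (ExX (phi j)) \<longleftrightarrow> (l \<in> {q0, q2} \<longleftrightarrow> ?K dvd Suc m)"
      using True by (cases l) (simp_all add: O_sat_ExX_unfold test not_test)
    have next_mu: "(\<exists>l' n'. ocn_step O_net (l, Suc m) (l', n') \<and> O_sat (l', n') (mu_of (phi j))) \<longleftrightarrow>
        (l = q0 \<and> phase ?K m = q1) \<or> (l = q1 \<and> phase ?K m \<in> {q1, q2}) \<or>
        (l = q2 \<and> phase ?K m = q3) \<or> (l = q3 \<and> phase ?K m \<in> {q0, q3})"
      using True by (cases l) (simp_all add: O_sat_ExX_unfold Suc.IH not_mu, auto)
    have "O_sat (l, Suc m) (mu_of (phi j)) \<longleftrightarrow>
        O_sat (l, Suc m) (ExX (phi j)) \<and>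
        (\<exists>l' n'. ocn_step O_net (l, Suc m) (l', n') \<and> O_sat (l', n') (mu_of (phi j)))"
      using True by (subst mu_of_def, subst O_sat_ExU) (auto simp: diamond_def O_sat_ExX O_step_q0 mu_of_def)
    also have "\<dots> \<longleftrightarrow> l = phase ?K (Suc m)"
      unfolding next_test next_mu using True phase_Suc_eq_iff[OF \<open>2 \<le> ?K\<close>, of m]
      by (cases l) auto
    finally show ?thesis .
  qed
qed

lemma phi_tests_dvd_Suc:
  assumes "1 \<le> j" and "phi_tests_dvd j"
  shows "phi_tests_dvd (Suc j)"
proof -
  have phi: "phi (Suc j) = Conj test (ExX (mu_of (phi j)))"
    using \<open>1 \<le> j\<close> by (cases j) auto
  have mu: "O_sat (l, c) (mu_of (phi j)) \<longleftrightarrow> l \<in> {q0, q1, q2, q3} \<and> l = phase (2 ^ j) c" for l c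
    using O_sat_mu_of_phi_iff[OF assms, of l c] phase_in_diamond[of "2 ^ j" c] by blast
  have "O_sat (t, c) (phi (Suc j)) \<longleftrightarrow> phase (2 ^ j) c = q0" for c
    by (auto simp: phi test_def O_sat_ExX_unfold mu)
  moreover have "O_sat (tb, c) (phi (Suc j)) \<longleftrightarrow> 0 < c \<and> phase (2 ^ j) c \<noteq> q0" for c
    using phase_in_diamond[of "2 ^ j" c] by (auto simp: phi test_def O_sat_ExX_unfold mu)
  ultimately show ?thesis
    by (auto simp: phi_tests_dvd_def phase_eq_q0_iff mult.commute intro: gr0I)
qed

lemma phi_tests_dvd: "1 \<le> j \<Longrightarrow> phi_tests_dvd j"
proof (induction j)
  case 0
  then show ?case by simp
next
  case (Suc j)
  then show ?case using phi_tests_dvd_1 phi_tests_dvd_Suc by (cases "j = 0") auto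
qed

theorem lemma2:
  fixes n i :: nat
  assumes "i \<ge> 1"
  shows "O_sat (tb, n) (psi i) \<longleftrightarrow> bitn i n = 1"
proof (cases i rule: psi.cases)
  case 1
  with assms show ?thesis by simp
next
  case 2
  with phi_tests_dvd_1 show ?thesis
    by (simp add: phi_tests_dvd_def bitn_def odd_iff_mod_2_eq_one)
next
  case (3 j)
  have "O_sat (tb, n) (psi i) \<longleftrightarrow> 0 < n \<and> phase (2 ^ Suc j) n \<in> {q1, q2}"
    using O_sat_mu_of_phi_iff[of "Suc j", OF _ phi_tests_dvd] 3
    by (auto simp: mu_def O_sat_ExX_unfold)
  also have "\<dots> \<longleftrightarrow> bitn i n = 1"
    using 3 phase_in_q12_iff[of "2 ^ Suc j" n]
    by (cases "n = 0") (auto simp: bitn_def odd_iff_mod_2_eq_one)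
  finally show ?thesis .
qed

end
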